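(* Let $G$ be a dicotic nonzugzwang scoring game all of whose terminal positions are numbers, and let $t\geq 0$. Then $0\leq Ls(G)-Ls(G_t)\leq t$ and $0\geq Rs(G)-Rs(G_t)\geq -t$.
   Context: A scoring game is $G=\langle G^L\mid G^R\rangle$ with $G^L,G^R$ finite nonempty sets of scoring games or empty sets decorated with a real, $\emptyset^s$; $\langle\emptyset^s\mid\emptyset^s\rangle$ is the number $s$. $Ls(\langle\emptyset^s\mid G^R\rangle)=s$, $Rs(\langle G^L\mid\emptyset^s\rangle)=s$, otherwise $Ls(G)=\max_{G^l\in G^L}Rs(G^l)$, $Rs(G)=\min_{G^r\in G^R}Ls(G^r)$. Dicotic: at every position both players have options or neither; nonzugzwang: $Ls(H)\ge Rs(H)$ at every position $H$. For a game $H$ and real $c$, $H+c$ is $H$ with $c$ added to every terminal score. Cooling: if $G$ is a number $k$, $G_t=k$ for all $t\ge 0$ and its temperature is $0$. Otherwise let $\widetilde G_t=\langle \{G^l_t-t: G^l\in G^L\}\mid \{G^r_t+t: G^r\in G^R\}\rangle$, let $t_0=\min\{t\geq 0: Ls(\widetilde G_t)=Rs(\widetilde G_t)\}$ (this minimum exists for dicotic nonzugzwang games), and set $G_t=\widetilde G_t$ for $t\le t_0$ and $G_t$ equal to the number $Ls(\widetilde G_{t_0})$ for $t>t_0$. The number $t_0$ is the temperature $\sigma(G)$. *)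

theory Defs
  imports Complex_Main "HOL-Library.FSet"
begin

text \<open>A side of a scoring game: either an empty option set decorated with a real
  score (the paper's empty set with superscript s), or a finite set of options.\<close>

datatype 'a side = Emp real | Opts "'a fset"

datatype sgame = SG "sgame side" "sgame side"

definition side_opts :: "'a side \<Rightarrow> 'a set" where
  "side_opts S = (case S of Emp s \<Rightarrow> {} | Opts A \<Rightarrow> fset A)"

fun side_ok :: "bool side \<Rightarrow> bool" where
  "side_ok (Emp s) = True"
| "side_ok (Opts A) = (A \<noteq> {||} \<and> (\<forall>b\<in>fset A. b))"

primrec wf_game :: "sgame \<Rightarrow> bool" where
  "wf_game (SG l r) = (side_ok (map_side wf_game l) \<and> side_ok (map_side wf_game r))"

fun lval :: "(real \<times> real) side \<Rightarrow> real" where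
  "lval (Emp s) = s"
| "lval (Opts A) = Max (snd ` fset A)"

fun rval :: "(real \<times> real) side \<Rightarrow> real" where
  "rval (Emp s) = s"
| "rval (Opts A) = Min (fst ` fset A)"

primrec scores :: "sgame \<Rightarrow> real \<times> real" where
  "scores (SG l r) = (lval (map_side scores l), rval (map_side scores r))"

definition Ls :: "sgame \<Rightarrow> real" where "Ls G = fst (scores G)"
definition Rs :: "sgame \<Rightarrow> real" where "Rs G = snd (scores G)"

definition left_opts :: "sgame \<Rightarrow> sgame set" where
  "left_opts G = (case G of SG l r \<Rightarrow> side_opts l)"
definition right_opts :: "sgame \<Rightarrow> sgame set" where
  "right_opts G = (case G of SG l r \<Rightarrow> side_opts r)"

inductive position :: "sgame \<Rightarrow> sgame \<Rightarrow> bool" where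
  refl: "position G G"
| step: "position H G \<Longrightarrow> H' \<in> left_opts H \<union> right_opts H \<Longrightarrow> position H' G"

definition num :: "real \<Rightarrow> sgame" where "num s = SG (Emp s) (Emp s)"

definition is_number :: "sgame \<Rightarrow> bool" where "is_number G = (\<exists>s. G = num s)"

definition dicotic :: "sgame \<Rightarrow> bool" where
  "dicotic G = (\<forall>H. position H G \<longrightarrow> (left_opts H = {} \<longleftrightarrow> right_opts H = {}))"

definition nonzugzwang :: "sgame \<Rightarrow> bool" where
  "nonzugzwang G = (\<forall>H. position H G \<longrightarrow> Ls H \<ge> Rs H)"

definition terminals_numbers :: "sgame \<Rightarrow> bool" where
  "terminals_numbers G = (\<forall>H. position H G \<longrightarrow> left_opts H = {} \<longrightarrow> right_opts H = {}
      \<longrightarrow> is_number H)"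

fun side_shift :: "real \<Rightarrow> 'a side \<Rightarrow> 'a side" where
  "side_shift c (Emp s) = Emp (s + c)"
| "side_shift c (Opts A) = Opts A"

primrec shift :: "real \<Rightarrow> sgame \<Rightarrow> sgame" where
  "shift c (SG l r) = SG (side_shift c (map_side (shift c) l)) (side_shift c (map_side (shift c) r))"

definition cool_step :: "(real \<Rightarrow> sgame) side \<Rightarrow> (real \<Rightarrow> sgame) side \<Rightarrow> real \<Rightarrow> sgame" where
  "cool_step L R t =
     (if (\<exists>k. L = Emp k \<and> R = Emp k) then num (THE k. L = Emp k)
      else
        (let tl = (\<lambda>u. SG (map_side (\<lambda>f. shift (- u) (f u)) L) (map_side (\<lambda>f. shift u (f u)) R));
             t0 = (LEAST u. 0 \<le> u \<and> Ls (tl u) = Rs (tl u))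
         in if t \<le> t0 then tl t else num (Ls (tl t0))))"

primrec cool :: "sgame \<Rightarrow> real \<Rightarrow> sgame" where
  "cool (SG l r) = cool_step (map_side cool l) (map_side cool r)"

end

(* For G = <A | B>, the tentatively cooled game \widetilde G_u (precool A B u)
   has Ls = max over a in A of Rs(a_u) - u and Rs = min over b in B of Ls(b_u) + u, so the
   inductive bounds Rs a <= Rs(a_u) <= Rs a + u and Ls b - u <= Ls(b_u) <= Ls b give
   Ls G - u <= Ls(\widetilde G_u) <= Ls G and Rs G <= Rs(\widetilde G_u) <= Rs G + u.
   The scores of G_t are those of \widetilde G_u for u = min t t0 <= t, whence the theorem.
   That the temperature t0 exists is the intermediate value theorem: Ls - Rs of \widetilde G_u
   is continuous in u (continuity is carried along the induction), nonnegative at u = 0 since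
   G is nonzugzwang, and eventually negative since every game eventually cools to a number. *)

theory Submission
  imports Defs "HOL-Analysis.Analysis"
begin

lemma wf_game_shift [simp]: "wf_game (shift c H) = wf_game H"
proof (induction H)
  case (SG l r)
  then show ?case
    by (cases l; cases r) (auto simp: side.map_comp o_def)
qed

lemma scores_shift: "wf_game H \<Longrightarrow> scores (shift c H) = (Ls H + c, Rs H + c)"
proof (induction H)
  case (SG l r)
  have "lval (map_side scores (side_shift c (map_side (shift c) l))) = lval (map_side scores l) + c"
  proof (cases l)
    case (Opts A)
    then have "fset A \<noteq> {}" and "\<forall>g\<in>fset A. scores (shift c g) = (Ls g + c, Rs g + c)"
      using SG by auto
    with Opts show ?thesis by (simp add: image_image Max_add_commute Rs_def)
  qed simp
  moreover have "rval (map_side scores (side_shift c (map_side (shift c) r))) = rval (map_side scores r) + c"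
  proof (cases r)
    case (Opts B)
    then have "fset B \<noteq> {}" and "\<forall>g\<in>fset B. scores (shift c g) = (Ls g + c, Rs g + c)"
      using SG by auto
    with Opts show ?thesis by (simp add: image_image Min_add_commute Ls_def)
  qed simp
  ultimately show ?case by (simp add: Ls_def Rs_def)
qed

lemma Ls_shift: "wf_game H \<Longrightarrow> Ls (shift c H) = Ls H + c"
  and Rs_shift: "wf_game H \<Longrightarrow> Rs (shift c H) = Rs H + c"
  by (simp_all add: Ls_def Rs_def scores_shift)

lemma Ls_num [simp]: "Ls (num s) = s"
  and Rs_num [simp]: "Rs (num s) = s"
  by (simp_all add: num_def Ls_def Rs_def)

lemma Ls_SG_Opts: "Ls (SG (Opts A) R) = Max (Rs ` fset A)"
  and Rs_SG_Opts: "Rs (SG L (Opts B)) = Min (Ls ` fset B)"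
  by (simp_all add: Ls_def Rs_def image_image)

lemma wf_game_cool: "wf_game G \<Longrightarrow> wf_game (cool G t)"
proof (induction G arbitrary: t)
  case (SG l r)
  then show ?case
    by (cases l; cases r) (auto simp: cool_step_def num_def Let_def side.map_comp o_def)
qed

definition precool :: "sgame fset \<Rightarrow> sgame fset \<Rightarrow> real \<Rightarrow> sgame" where
  "precool A B u = SG (Opts ((\<lambda>g. shift (- u) (cool g u)) |`| A)) (Opts ((\<lambda>g. shift u (cool g u)) |`| B))"

lemma cool_SG_Opts:
  "cool (SG (Opts A) (Opts B)) t =
    (let t0 = (LEAST u. 0 \<le> u \<and> Ls (precool A B u) = Rs (precool A B u))
     in if t \<le> t0 then precool A B t else num (Ls (precool A B t0)))"
  unfolding cool.simps cool_step_def precool_def Let_def by (simp add: o_def)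

lemma Ls_precool:
  "\<forall>g\<in>fset A. wf_game g \<Longrightarrow> Ls (precool A B u) = Max ((\<lambda>g. Rs (cool g u) - u) ` fset A)"
  and Rs_precool:
  "\<forall>g\<in>fset B. wf_game g \<Longrightarrow> Rs (precool A B u) = Min ((\<lambda>g. Ls (cool g u) + u) ` fset B)"
  unfolding precool_def Ls_SG_Opts Rs_SG_Opts by (simp_all add: image_image Ls_shift Rs_shift wf_game_cool)

(* No hypothesis is needed: even if the LEAST in cool_step is a junk value, the result is a
   fixed number beyond it. *)
lemma cool_step_eventually_number: "\<exists>c. \<forall>\<^sub>F t in at_top. cool_step L R t = num c"
proof (cases "\<exists>k. L = Emp k \<and> R = Emp k")
  case True
  then show ?thesis by (auto simp: cool_step_def)
next
  case False
  have "\<forall>\<^sub>F t in at_top. (if t \<le> t0 then f t else num c) = num c" for t0 :: real and f c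
    using eventually_gt_at_top[of t0] by eventually_elim auto
  then show ?thesis
    unfolding cool_step_def Let_def if_not_P[OF False] by (rule exI)
qed

lemma cool_eventually_number: "\<exists>c. \<forall>\<^sub>F t in at_top. cool G t = num c"
  by (cases G) (simp add: cool_step_eventually_number)

lemma Max_image_mono:
  fixes f g :: "'a \<Rightarrow> 'b::linorder"
  assumes "finite S" "S \<noteq> {}" "\<And>x. x \<in> S \<Longrightarrow> f x \<le> g x"
  shows "Max (f ` S) \<le> Max (g ` S)"
  using assms by (subst Max_le_iff) (auto intro: order_trans[OF _ Max_ge])

lemma Min_image_mono:
  fixes f g :: "'a \<Rightarrow> 'b::linorder"
  assumes "finite S" "S \<noteq> {}" "\<And>x. x \<in> S \<Longrightarrow> f x \<le> g x"
  shows "Min (f ` S) \<le> Min (g ` S)"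
  using assms by (subst Min_ge_iff) (auto intro: order_trans[OF Min_le])

lemma continuous_on_Max:
  fixes f :: "'i \<Rightarrow> 'a::topological_space \<Rightarrow> 'b::linorder_topology"
  assumes "finite I" "I \<noteq> {}" "\<And>i. i \<in> I \<Longrightarrow> continuous_on U (f i)"
  shows "continuous_on U (\<lambda>x. Max ((\<lambda>i. f i x) ` I))"
  using assms by (induction I rule: finite_ne_induct) (auto intro: continuous_on_max)

lemma continuous_on_Min:
  fixes f :: "'i \<Rightarrow> 'a::topological_space \<Rightarrow> 'b::linorder_topology"
  assumes "finite I" "I \<noteq> {}" "\<And>i. i \<in> I \<Longrightarrow> continuous_on U (f i)"
  shows "continuous_on U (\<lambda>x. Min ((\<lambda>i. f i x) ` I))"
  using assms by (induction I rule: finite_ne_induct) (auto intro: continuous_on_min)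

lemma Least_in_closed:
  fixes S :: "real set"
  assumes "closed S" "bdd_below S" "S \<noteq> {}"
  shows "(LEAST x. x \<in> S) \<in> S"
proof -
  have Inf_in: "Inf S \<in> S"
    using assms by (intro closed_contains_Inf)
  have "(LEAST x. x \<in> S) = Inf S"
  proof (rule Least_equality)
    fix y
    assume "y \<in> S"
    then show "Inf S \<le> y"
      using assms(2) by (rule cInf_lower)
  qed (rule Inf_in)
  with Inf_in show ?thesis by simp
qed

lemma first_crossing:
  fixes f g :: "real \<Rightarrow> real"
  assumes "continuous_on UNIV f" "continuous_on UNIV g"
    and "g 0 \<le> f 0" "0 \<le> T" "f T \<le> g T"
  defines "t0 \<equiv> LEAST u. 0 \<le> u \<and> f u = g u"
  shows "0 \<le> t0 \<and> f t0 = g t0"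
proof -
  let ?S = "{u. 0 \<le> u \<and> f u = g u}"
  have "continuous_on {0..T} (\<lambda>u. f u - g u)"
    using assms(1,2) by (intro continuous_on_diff) (auto intro: continuous_on_subset)
  moreover have "f T - g T \<le> 0" "0 \<le> f 0 - g 0"
    using assms(3,5) by auto
  ultimately have "\<exists>u. 0 \<le> u \<and> u \<le> T \<and> f u - g u = 0"
    using assms(4) by (intro IVT2'[where f = "\<lambda>u. f u - g u"])
  then have "?S \<noteq> {}" by auto
  moreover have "closed ?S"
    using assms(1,2) continuous_on_const continuous_on_id
    by (intro closed_Collect_conj closed_Collect_le closed_Collect_eq)
  moreover have "bdd_below ?S"
    by (auto intro: bdd_belowI)
  ultimately have "(LEAST u. u \<in> ?S) \<in> ?S"
    by (intro Least_in_closed)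
  then show ?thesis
    unfolding t0_def by simp
qed

lemma position_option: "position K H \<Longrightarrow> H \<in> left_opts G \<union> right_opts G \<Longrightarrow> position K G"
  by (induction rule: position.induct) (auto intro: position.intros)

lemma wf_game_option: "wf_game G \<Longrightarrow> H \<in> left_opts G \<union> right_opts G \<Longrightarrow> wf_game H"
  by (cases G) (auto simp: left_opts_def right_opts_def side_opts_def split: side.splits)

lemma
  assumes "H \<in> left_opts G \<union> right_opts G"
  shows dicotic_option: "dicotic G \<Longrightarrow> dicotic H"
    and nonzugzwang_option: "nonzugzwang G \<Longrightarrow> nonzugzwang H"
    and terminals_numbers_option: "terminals_numbers G \<Longrightarrow> terminals_numbers H"
  using assms position_option unfolding dicotic_def nonzugzwang_def terminals_numbers_def
  by blast+

lemma dicotic_game_cases [consumes 3]: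
  assumes "wf_game (SG l r)" "dicotic (SG l r)" "terminals_numbers (SG l r)"
  obtains (number) k where "SG l r = num k"
  | (options) A B where "l = Opts A" "r = Opts B" "fset A \<noteq> {}" "fset B \<noteq> {}"
proof -
  have "left_opts (SG l r) = {} \<longleftrightarrow> right_opts (SG l r) = {}"
    using assms(2) position.refl unfolding dicotic_def by blast
  moreover have "left_opts (SG l r) = {} \<Longrightarrow> right_opts (SG l r) = {} \<Longrightarrow> is_number (SG l r)"
    using assms(3) position.refl unfolding terminals_numbers_def by blast
  ultimately show ?thesis
    using assms(1) that
    by (cases l; cases r) (auto simp: left_opts_def right_opts_def side_opts_def is_number_def)
qed

definition cools_regularly :: "sgame \<Rightarrow> bool" where
  "cools_regularly G \<longleftrightarrow>
     (\<forall>t\<ge>0. Ls (cool G t) \<in> {Ls G - t..Ls G} \<and> Rs (cool G t) \<in> {Rs G..Rs G + t}) \<and>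
     continuous_on UNIV (\<lambda>t. Ls (cool G t)) \<and> continuous_on UNIV (\<lambda>t. Rs (cool G t))"

lemma cools_regularlyD:
  assumes "cools_regularly G" "0 \<le> t"
  shows "Ls (cool G t) \<in> {Ls G - t..Ls G}" and "Rs (cool G t) \<in> {Rs G..Rs G + t}"
  using assms unfolding cools_regularly_def by blast+

lemma cools_regularly_num: "cools_regularly (num k)"
  by (simp add: cools_regularly_def num_def cool_step_def)

context
  fixes A B :: "sgame fset"
  assumes wf_A: "\<forall>g\<in>fset A. wf_game g" and wf_B: "\<forall>g\<in>fset B. wf_game g"
    and ne_A: "fset A \<noteq> {}" and ne_B: "fset B \<noteq> {}"
begin

lemma precool_bounds:
  assumes "\<forall>g\<in>fset A \<union> fset B. cools_regularly g" "0 \<le> t"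
  shows "Ls (precool A B t) \<in> {Max (Rs ` fset A) - t..Max (Rs ` fset A)}"
    and "Rs (precool A B t) \<in> {Min (Ls ` fset B)..Min (Ls ` fset B) + t}"
proof -
  have A: "Rs g \<le> Rs (cool g t)" "Rs (cool g t) \<le> Rs g + t" if "g \<in> fset A" for g
    using cools_regularlyD(2)[of g t] assms that by auto
  have B: "Ls g - t \<le> Ls (cool g t)" "Ls (cool g t) \<le> Ls g" if "g \<in> fset B" for g
    using cools_regularlyD(1)[of g t] assms that by auto
  have "Max ((\<lambda>g. Rs g - t) ` fset A) \<le> Max ((\<lambda>g. Rs (cool g t) - t) ` fset A)"
    and "Max ((\<lambda>g. Rs (cool g t) - t) ` fset A) \<le> Max (Rs ` fset A)"
    by (intro Max_image_mono ne_A; force dest: A)+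
  then show "Ls (precool A B t) \<in> {Max (Rs ` fset A) - t..Max (Rs ` fset A)}"
    using Max_add_commute[OF _ ne_A, of Rs "- t"] by (simp add: Ls_precool[OF wf_A])
  have "Min (Ls ` fset B) \<le> Min ((\<lambda>g. Ls (cool g t) + t) ` fset B)"
    and "Min ((\<lambda>g. Ls (cool g t) + t) ` fset B) \<le> Min ((\<lambda>g. Ls g + t) ` fset B)"
    by (intro Min_image_mono ne_B; force dest: B)+
  then show "Rs (precool A B t) \<in> {Min (Ls ` fset B)..Min (Ls ` fset B) + t}"
    using Min_add_commute[OF _ ne_B, of Ls t] by (simp add: Rs_precool[OF wf_B])
qed

lemma continuous_on_precool:
  assumes "\<forall>g\<in>fset A \<union> fset B. cools_regularly g"
  shows "continuous_on UNIV (\<lambda>u. Ls (precool A B u))"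
    and "continuous_on UNIV (\<lambda>u. Rs (precool A B u))"
  using assms unfolding Ls_precool[OF wf_A] Rs_precool[OF wf_B] cools_regularly_def
  by (auto intro!: continuous_on_Max continuous_on_Min continuous_intros simp: ne_A ne_B)

lemma precool_eventually_crossed: "\<forall>\<^sub>F u in at_top. Ls (precool A B u) \<le> Rs (precool A B u)"
proof -
  obtain c where "\<forall>g\<in>fset A \<union> fset B. \<forall>\<^sub>F u in at_top. cool g u = num (c g)"
    using bchoice[of "fset A \<union> fset B"] cool_eventually_number by meson
  then have "\<forall>\<^sub>F u in at_top. \<forall>g\<in>fset A \<union> fset B. cool g u = num (c g)"
    by (intro eventually_ball_finite) auto
  moreover have "\<forall>\<^sub>F u in at_top. (Max (c ` fset A) - Min (c ` fset B)) / 2 \<le> u"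
    by (rule eventually_ge_at_top)
  ultimately show ?thesis
  proof eventually_elim
    case (elim u)
    then have "Ls (precool A B u) = Max (c ` fset A) - u"
      using Max_add_commute[OF _ ne_A, of c "- u"] by (simp add: Ls_precool[OF wf_A])
    moreover have "Rs (precool A B u) = Min (c ` fset B) + u"
      using elim Min_add_commute[OF _ ne_B, of c u] by (simp add: Rs_precool[OF wf_B])
    ultimately show ?case
      using elim by simp
  qed
qed

lemma cools_regularly_SG_Opts:
  assumes regular: "\<forall>g\<in>fset A \<union> fset B. cools_regularly g"
    and nonzugzwang: "Rs (SG (Opts A) (Opts B)) \<le> Ls (SG (Opts A) (Opts B))"
  shows "cools_regularly (SG (Opts A) (Opts B))"
proof -
  let ?G = "SG (Opts A) (Opts B)"
  define \<alpha> where "\<alpha> u = Ls (precool A B u)" for u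
  define \<beta> where "\<beta> u = Rs (precool A B u)" for u
  define t0 where "t0 = (LEAST u. 0 \<le> u \<and> \<alpha> u = \<beta> u)"
  have cont: "continuous_on UNIV \<alpha>" "continuous_on UNIV \<beta>"
    using continuous_on_precool[OF regular] unfolding \<alpha>_def \<beta>_def by auto
  have bounds: "\<alpha> t \<in> {Ls ?G - t..Ls ?G}"
    "\<beta> t \<in> {Rs ?G..Rs ?G + t}" if "0 \<le> t" for t
    using precool_bounds[OF regular that] unfolding \<alpha>_def \<beta>_def Ls_SG_Opts Rs_SG_Opts by auto
  have "\<beta> 0 \<le> \<alpha> 0"
    using bounds[of 0] nonzugzwang by simp
  moreover obtain T where "0 \<le> T" "\<alpha> T \<le> \<beta> T"
    using eventually_happens'[OF _ eventually_conj[OF eventually_ge_at_top precool_eventually_crossed]]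
    unfolding \<alpha>_def \<beta>_def by auto
  ultimately have t0: "0 \<le> t0" "\<alpha> t0 = \<beta> t0"
    using first_crossing[OF cont] unfolding t0_def by blast+
  have "cool ?G t = (if t \<le> t0 then precool A B t else num (\<alpha> t0))" for t
    by (simp only: cool_SG_Opts Let_def t0_def \<alpha>_def \<beta>_def)
  then have Ls_cool: "Ls (cool ?G t) = \<alpha> (min t t0)"
    and Rs_cool: "Rs (cool ?G t) = \<beta> (min t t0)" for t
    using t0 by (auto simp: \<alpha>_def \<beta>_def min_def)
  have "continuous_on UNIV (\<lambda>t. min t t0)"
    by (intro continuous_on_min continuous_on_id continuous_on_const)
  then have "continuous_on UNIV (\<lambda>t. \<alpha> (min t t0))" "continuous_on UNIV (\<lambda>t. \<beta> (min t t0))"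
    using cont by (auto intro: continuous_on_compose2)
  moreover have "\<alpha> (min t t0) \<in> {Ls ?G - t..Ls ?G}"
    "\<beta> (min t t0) \<in> {Rs ?G..Rs ?G + t}" if "0 \<le> t" for t
    using bounds[of "min t t0"] that t0(1) by auto
  ultimately show ?thesis
    unfolding cools_regularly_def Ls_cool Rs_cool by blast
qed

end

lemma cools_regularly:
  assumes "wf_game G" "dicotic G" "nonzugzwang G" "terminals_numbers G"
  shows "cools_regularly G"
  using assms
proof (induction G)
  case (SG l r)
  show ?case
    using SG.prems(1,2,4)
  proof (cases rule: dicotic_game_cases)
    case (number k)
    then show ?thesis by (simp add: cools_regularly_num)
  next
    case (options A B)
    have "wf_game g \<and> cools_regularly g" if "g \<in> fset A \<union> fset B" for g
    proof -
      have option: "g \<in> left_opts (SG l r) \<union> right_opts (SG l r)"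
        using options that by (auto simp: left_opts_def right_opts_def side_opts_def)
      have "wf_game g" "dicotic g" "nonzugzwang g" "terminals_numbers g"
        using wf_game_option[OF SG.prems(1) option] dicotic_option[OF option SG.prems(2)]
          nonzugzwang_option[OF option SG.prems(3)] terminals_numbers_option[OF option SG.prems(4)] .
      moreover have "g \<in> set_side l \<union> set_side r"
        using options that by simp
      ultimately show ?thesis
        using SG.IH by blast
    qed
    moreover have "Rs (SG l r) \<le> Ls (SG l r)"
      using SG.prems(3) position.refl unfolding nonzugzwang_def by blast
    ultimately show ?thesis
      using cools_regularly_SG_Opts[of A B] options by simp
  qed
qed

theorem mainTheorem2:
  fixes G :: sgame and t :: real
  assumes "wf_game G" and "dicotic G" and "nonzugzwang G" and "terminals_numbers G"
    and "0 \<le> t"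
  shows "0 \<le> Ls G - Ls (cool G t) \<and> Ls G - Ls (cool G t) \<le> t \<and>
         0 \<ge> Rs G - Rs (cool G t) \<and> Rs G - Rs (cool G t) \<ge> - t"
proof -
  have "Ls (cool G t) \<in> {Ls G - t..Ls G} \<and> Rs (cool G t) \<in> {Rs G..Rs G + t}"
    using cools_regularlyD[OF cools_regularly[OF assms(1-4)] assms(5)] by blast
  then show ?thesis by auto
qed

end
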